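(* Let $u$ be a set, $F,G$ conjunctive set transformers on $u$ with $F(u)=u$ and $G(u)=u$, and $q\subseteq u$. Then $X(q)(\varnothing)$ equals the least fixpoint of the monotone map ${\cal F}(q)(\varnothing):Y\mapsto q\cup(G(\varnothing)\cap F(Y))$ on $\mathbb{P}(u)$; equivalently, the guard $\overline{X(q)(\varnothing)}$ of $X(q)$ is the complement of this least fixpoint.
   Context: A set transformer on $u$ is a map $E:\mathbb{P}(u)\to\mathbb{P}(u)$; it is conjunctive if it preserves intersections of nonempty families of subsets (in particular it is monotone). For $a\subseteq u$, $\overline{a}=u\setminus a$; $\mathrm{grd}(E)=\overline{E(\varnothing)}$. The fair iteration $X(q)=\overline{q}\Longrightarrow((F\,;X(q))\mathrel{\triangledown} G)$ (guarded command, sequencing, and dovetail/fair choice) is the set transformer $X(q)(r)={\cal L}(X(q))(r)\cap\mathrm{pre}(X(q))$ where: the liberal part ${\cal L}(X(q))(r)$ is the greatest fixpoint of the monotone map $Y\mapsto q\cup(G(r)\cap F(Y))$ on $\mathbb{P}(u)$, and the termination set $\mathrm{pre}(X(q))$ is the least fixpoint of the monotone map $Y\mapsto q\cup\mathrm{grd}(G)\cup F(Y)$. *)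

theory Defs
  imports Main
begin

text \<open>The universe u is rendered as the type 'a (u = UNIV), so P(u) = 'a set and
  the complement of a relative to u is - a.\<close>

definition conjunctive :: "('a set \<Rightarrow> 'a set) \<Rightarrow> bool" where
  "conjunctive E \<longleftrightarrow> (\<forall>S :: 'a set set. S \<noteq> {} \<longrightarrow> E (\<Inter> S) = (\<Inter>A\<in>S. E A))"

definition grd :: "('a set \<Rightarrow> 'a set) \<Rightarrow> 'a set" where
  "grd E = - E {}"

definition fair_lib :: "('a set \<Rightarrow> 'a set) \<Rightarrow> ('a set \<Rightarrow> 'a set) \<Rightarrow> 'a set \<Rightarrow> 'a set \<Rightarrow> 'a set" where
  "fair_lib F G q r = gfp (\<lambda>Y. q \<union> (G r \<inter> F Y))"

definition fair_pre :: "('a set \<Rightarrow> 'a set) \<Rightarrow> ('a set \<Rightarrow> 'a set) \<Rightarrow> 'a set \<Rightarrow> 'a set" where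
  "fair_pre F G q = lfp (\<lambda>Y. q \<union> grd G \<union> F Y)"

text \<open>The fair iteration X(q) = not q ==> ((F ; X(q)) dovetail G).\<close>
definition fair_iter :: "('a set \<Rightarrow> 'a set) \<Rightarrow> ('a set \<Rightarrow> 'a set) \<Rightarrow> 'a set \<Rightarrow> 'a set \<Rightarrow> 'a set" where
  "fair_iter F G q r = fair_lib F G q r \<inter> fair_pre F G q"

end

theory Submission
  imports Defs
begin

text \<open>Write \<open>L\<close> for the greatest and \<open>M\<close> for the least fixpoint of
  \<open>Y \<mapsto> q \<union> (g \<inter> F Y)\<close>, where \<open>g = G {}\<close> (so \<open>-g = grd G\<close>), and \<open>P\<close> for the least fixpoint of \<open>Y \<mapsto> q \<union> -g \<union> F Y\<close>.
  Clearly \<open>M \<subseteq> L \<inter> P\<close>. Conversely \<open>-L \<union> M\<close> is a prefixpoint of the second map: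
  a point of \<open>L\<close> outside \<open>q\<close> lies in \<open>g \<inter> F L\<close>, and if it also lies in \<open>F (-L \<union> M)\<close>
  then, \<open>F\<close> being conjunctive, it lies in \<open>F (L \<inter> (-L \<union> M)) \<subseteq> F M\<close>, hence in \<open>M\<close>.
  So \<open>P \<subseteq> -L \<union> M\<close>, i.e. \<open>L \<inter> P = M\<close>.\<close>

lemma conjunctive_Int:
  assumes "conjunctive F"
  shows "F (A \<inter> B) = F A \<inter> F B"
  using assms[unfolded conjunctive_def, rule_format, of "{A, B}"] by simp

lemma mono_if_Int_preserving:
  assumes "\<And>A B. F (A \<inter> B) = F A \<inter> F B"
  shows "mono F"
proof (rule monoI)
  fix A B :: "'a set"
  assume "A \<subseteq> B"
  then have "F A = F A \<inter> F B" by (metis assms Int_absorb2 Int_commute)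
  then show "F A \<subseteq> F B" by blast
qed

lemma lfp_le_compl_gfp_Un_lfp:
  fixes F :: "'a set \<Rightarrow> 'a set" and q g :: "'a set"
  assumes F_Int: "\<And>A B. F (A \<inter> B) = F A \<inter> F B"
  defines "L \<equiv> gfp (\<lambda>Y. q \<union> (g \<inter> F Y))"
    and "M \<equiv> lfp (\<lambda>Y. q \<union> (g \<inter> F Y))"
  shows "lfp (\<lambda>Y. q \<union> - g \<union> F Y) \<subseteq> - L \<union> M"
proof (rule lfp_lowerbound)
  have mono_F: "mono F" using F_Int by (rule mono_if_Int_preserving)
  have mono_step: "mono (\<lambda>Y. q \<union> (g \<inter> F Y))"
    using mono_F by (auto simp: mono_def)
  have L_unfold: "L = q \<union> (g \<inter> F L)"
    unfolding L_def by (rule gfp_unfold[OF mono_step])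
  have M_unfold: "M = q \<union> (g \<inter> F M)"
    unfolding M_def by (rule lfp_unfold[OF mono_step])
  show "q \<union> - g \<union> F (- L \<union> M) \<subseteq> - L \<union> M"
  proof
    fix x
    assume x: "x \<in> q \<union> - g \<union> F (- L \<union> M)"
    show "x \<in> - L \<union> M"
    proof (cases "x \<in> L \<and> x \<notin> q")
      case False
      then show ?thesis using M_unfold by blast
    next
      case True
      with L_unfold have "x \<in> g" and "x \<in> F L" by blast+
      with x True have "x \<in> F L \<inter> F (- L \<union> M)" by blast
      also have "\<dots> = F (L \<inter> (- L \<union> M))" by (rule F_Int[symmetric])
      also have "\<dots> \<subseteq> F M" using mono_F by (rule monoD) blast
      finally show ?thesis using \<open>x \<in> g\<close> M_unfold by blast
    qed
  qed
qed

lemma gfp_Int_lfp_eq_lfp: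
  fixes F :: "'a set \<Rightarrow> 'a set"
  assumes F_Int: "\<And>A B. F (A \<inter> B) = F A \<inter> F B"
  shows "gfp (\<lambda>Y. q \<union> (g \<inter> F Y)) \<inter> lfp (\<lambda>Y. q \<union> - g \<union> F Y)
         = lfp (\<lambda>Y. q \<union> (g \<inter> F Y))"
proof -
  have "mono F" using F_Int by (rule mono_if_Int_preserving)
  then have mono_step: "mono (\<lambda>Y. q \<union> (g \<inter> F Y))" by (auto simp: mono_def)
  have "lfp (\<lambda>Y. q \<union> (g \<inter> F Y)) \<subseteq> gfp (\<lambda>Y. q \<union> (g \<inter> F Y))"
    by (rule lfp_le_gfp[OF mono_step])
  moreover have "lfp (\<lambda>Y. q \<union> (g \<inter> F Y)) \<subseteq> lfp (\<lambda>Y. q \<union> - g \<union> F Y)"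
    by (rule lfp_mono) blast
  moreover note lfp_le_compl_gfp_Un_lfp[OF F_Int, of q g]
  ultimately show ?thesis by blast
qed

theorem lemma4:
  fixes F G :: "'a set \<Rightarrow> 'a set" and q :: "'a set"
  assumes "conjunctive F" and "conjunctive G"
    and "F UNIV = UNIV" and "G UNIV = UNIV"
  shows "fair_iter F G q {} = lfp (\<lambda>Y. q \<union> (G {} \<inter> F Y))
         \<and> grd (fair_iter F G q) = - lfp (\<lambda>Y. q \<union> (G {} \<inter> F Y))"
proof -
  have iter_empty: "fair_iter F G q {} = lfp (\<lambda>Y. q \<union> (G {} \<inter> F Y))"
    unfolding fair_iter_def fair_lib_def fair_pre_def grd_def
    by (rule gfp_Int_lfp_eq_lfp[OF conjunctive_Int[OF assms(1)]])
  moreover have "grd (fair_iter F G q) = - fair_iter F G q {}"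
    by (simp add: grd_def)
  ultimately show ?thesis by simp
qed

end
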